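(* Let $k$ be a field, $e, h \geq 1$ integers, and $M$ a finite-dimensional $k[T]/T^e$-module generated by at most $h$ elements. For $1 \leq i \leq e$ let $\delta_i := \dim_k M[T^i]/M[T^{i-1}]$ (so $\delta_1 \geq \dots \geq \delta_e$). Then $\mathrm{Hdg}(M) = P(\delta_1, \dots, \delta_e)$.
   Context: $M[T^i]$ denotes the kernel of multiplication by $T^i$ on $M$. For integers $d_1,\dots,d_N \in [0,h]$, $P(d_1,\dots,d_N)$ is the function on $[0,h]$ given by $x \mapsto \frac{1}{N}\sum_{i=1}^N \max(0, x+d_i-h)$. Writing $M \simeq \bigoplus_{i=1}^h k[T]/T^{a_i}$ with integers $0 \leq a_i \leq e$, the Hodge polygon $\mathrm{Hdg}(M)$ is the convex polygon on $[0,h]$ starting at the origin whose slopes are $\frac{a_1}{e}, \dots, \frac{a_h}{e}$ (each on an interval of length $1$, arranged in increasing order). *)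

theory Defs
  imports Complex_Main
begin

text \<open>A module over k[T]/T^e is modelled as a k-vector space (the type 'm with scalar
multiplication scale) together with a k-linear endomorphism T with T^e = 0.\<close>

definition kerT :: "('m::zero \<Rightarrow> 'm) \<Rightarrow> nat \<Rightarrow> 'm set" where
  "kerT T i = {x. (T ^^ i) x = 0}"

text \<open>delta_i = dim_k M[T^i]/M[T^(i-1)] = dim M[T^i] - dim M[T^(i-1)] (finite dimension).\<close>
definition delta :: "('k::field \<Rightarrow> 'm::ab_group_add \<Rightarrow> 'm) \<Rightarrow> ('m \<Rightarrow> 'm) \<Rightarrow> nat \<Rightarrow> real" where
  "delta scale T i = real (vector_space.dim scale (kerT T i)) - real (vector_space.dim scale (kerT T (i - 1)))"

text \<open>M is isomorphic to the direct sum of k[T]/T^(a_i), i < h, via the generators v_i: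
  T^(a_i) v_i = 0, and the vectors T^j v_i (i < h, j < a_i) form a basis of M
  (as an indexed family: unique coefficients, and they span).\<close>
definition is_cyclic_decomposition ::
  "('k::field \<Rightarrow> 'm::ab_group_add \<Rightarrow> 'm) \<Rightarrow> ('m \<Rightarrow> 'm) \<Rightarrow> nat \<Rightarrow> nat list \<Rightarrow> (nat \<Rightarrow> 'm) \<Rightarrow> bool" where
  "is_cyclic_decomposition scale T h a v \<longleftrightarrow>
     length a = h \<and>
     (\<forall>i<h. (T ^^ (a ! i)) (v i) = 0) \<and>
     (\<forall>c :: nat \<Rightarrow> nat \<Rightarrow> 'k.
        (\<Sum>i<h. \<Sum>j<a ! i. scale (c i j) ((T ^^ j) (v i))) = 0 \<longrightarrow>
        (\<forall>i<h. \<forall>j<a ! i. c i j = 0)) \<and>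
     module.span scale {(T ^^ j) (v i) | i j. i < h \<and> j < a ! i} = UNIV"

text \<open>Hodge polygon of the slopes a_1/e, ..., a_h/e: the convex piecewise linear function on
  [0,h] starting at 0 whose slopes, sorted increasingly, are a_i/e on consecutive intervals of
  length 1.\<close>
definition hodge_polygon :: "nat \<Rightarrow> nat list \<Rightarrow> real \<Rightarrow> real" where
  "hodge_polygon e a x =
     (let b = sort a; n = nat \<lfloor>x\<rfloor> in
       (\<Sum>i<n. real (b ! i) / real e)
       + (x - real n) * (if n < length b then real (b ! n) / real e else 0))"

definition P_poly :: "nat \<Rightarrow> real list \<Rightarrow> real \<Rightarrow> real" where
  "P_poly h d x = (1 / real (length d)) * (\<Sum>i<length d. max 0 (x + d ! i - real h))"

end

(* If T^l v_j (l < a_j) is a cyclic basis of M, then M[T^i] is spanned by the basis vectors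
   with l >= a_j - i: T^i maps the remaining ones injectively onto basis vectors.  Hence
   dim M[T^i] = sum_j min(a_j, i) and delta_(i+1) = #{j. a_j > i}.
   On the Hodge side, split every slope as a_j/e = (1/e) sum_(i<e) [i < a_j].  The polygon is
   linear in its slope sequence, and the polygon with the sorted 0/1 slopes [i < a_j] is
   x |-> max(0, x - #{j. a_j <= i}) = max(0, x + delta_(i+1) - h). *)

theory Submission
  imports Defs
begin

definition polygon_of_slopes :: "(nat \<Rightarrow> real) \<Rightarrow> nat \<Rightarrow> real \<Rightarrow> real" where
  "polygon_of_slopes s h x =
     (let n = nat \<lfloor>x\<rfloor> in (\<Sum>m<n. s m) + (x - real n) * (if n < h then s n else 0))"

lemma hodge_polygon_eq_polygon_of_slopes:
  "hodge_polygon e a x = polygon_of_slopes (\<lambda>m. real (sort a ! m) / real e) (length a) x"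
  by (simp add: hodge_polygon_def polygon_of_slopes_def Let_def)

lemma polygon_of_slopes_cong:
  assumes "\<And>m. m < h \<Longrightarrow> s m = s' m" and "x \<le> real h"
  shows "polygon_of_slopes s h x = polygon_of_slopes s' h x"
proof -
  have "nat \<lfloor>x\<rfloor> \<le> h" using assms(2) by linarith
  then show ?thesis using assms(1) by (simp add: polygon_of_slopes_def Let_def)
qed

lemma polygon_of_slopes_sum:
  "polygon_of_slopes (\<lambda>m. \<Sum>i\<in>A. s i m) h x = (\<Sum>i\<in>A. polygon_of_slopes (s i) h x)"
  by (simp add: polygon_of_slopes_def Let_def sum.distrib sum.swap[of _ A] sum_distrib_left)

lemma polygon_of_slopes_divide:
  "polygon_of_slopes (\<lambda>m. s m / c) h x = polygon_of_slopes s h x / c"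
  by (simp add: polygon_of_slopes_def Let_def sum_divide_distrib add_divide_distrib)

lemma polygon_of_slopes_step:
  assumes "k \<le> h" and "0 \<le> x" and "x \<le> real h"
  shows "polygon_of_slopes (\<lambda>m. of_bool (k \<le> m)) h x = max 0 (x - real k)"
proof -
  define n where "n = nat \<lfloor>x\<rfloor>"
  have n: "real n \<le> x" "x < real n + 1" "n \<le> h"
    using assms(2,3) unfolding n_def by linarith+
  have "{..<n} \<inter> {m. k \<le> m} = {k..<n}" by auto
  then have "(\<Sum>m<n. of_bool (k \<le> m) :: real) = real (n - k)" by simp
  then show ?thesis
    using n assms(1,3) unfolding polygon_of_slopes_def Let_def n_def[symmetric]
    by (cases "k \<le> n"; cases "n < h") (auto simp: of_nat_diff)
qed

lemma sorted_nth_threshold: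
  assumes "sorted b"
  obtains k where "k \<le> length b" and "\<And>m. m < length b \<Longrightarrow> s < b ! m \<longleftrightarrow> k \<le> m"
proof
  let ?k = "length (takeWhile (\<lambda>y. y \<le> s) b)"
  show "?k \<le> length b" by (rule length_takeWhile_le)
  fix m assume m: "m < length b"
  show "s < b ! m \<longleftrightarrow> ?k \<le> m"
  proof
    assume km: "?k \<le> m"
    then have "\<not> b ! ?k \<le> s"
      using m by (intro nth_length_takeWhile) simp
    moreover have "b ! ?k \<le> b ! m"
      using km m by (rule sorted_nth_mono[OF assms])
    ultimately show "s < b ! m" by simp
  next
    assume "s < b ! m"
    show "?k \<le> m"
    proof (rule ccontr)
      assume "\<not> ?k \<le> m"
      then have "b ! m \<in> set (takeWhile (\<lambda>y. y \<le> s) b)"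
        by (metis not_le nth_mem takeWhile_nth)
      with \<open>s < b ! m\<close> show False by (auto dest: set_takeWhileD)
    qed
  qed
qed

lemma polygon_of_slopes_sorted_indicator:
  assumes "sorted b" and "0 \<le> x" and "x \<le> real (length b)"
  shows "polygon_of_slopes (\<lambda>m. of_bool (s < b ! m)) (length b) x
           = max 0 (x + real (card {m. m < length b \<and> s < b ! m}) - real (length b))"
proof -
  obtain k where k: "k \<le> length b" "\<And>m. m < length b \<Longrightarrow> s < b ! m \<longleftrightarrow> k \<le> m"
    using sorted_nth_threshold[OF assms(1)] by blast
  have "{m. m < length b \<and> s < b ! m} = {k..<length b}"
    using k(2) by auto
  moreover have "polygon_of_slopes (\<lambda>m. of_bool (s < b ! m)) (length b) x
                   = polygon_of_slopes (\<lambda>m. of_bool (k \<le> m)) (length b) x"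
    using k(2) assms(3) by (intro polygon_of_slopes_cong) simp_all
  ultimately show ?thesis
    using polygon_of_slopes_step[OF k(1) assms(2,3)] k(1) by (simp add: of_nat_diff)
qed

lemma card_nth_sort:
  "card {m. m < length a \<and> P (sort a ! m)} = card {j. j < length a \<and> P (a ! j)}"
  using length_filter_conv_card[of P "sort a"] length_filter_conv_card[of P a]
  by (simp add: filter_sort)

lemma hodge_polygon_eq_sum_max:
  assumes "\<forall>j<length a. a ! j \<le> e" and "0 \<le> x" and "x \<le> real (length a)"
  shows "hodge_polygon e a x
           = (\<Sum>i<e. max 0 (x + real (card {j. j < length a \<and> i < a ! j}) - real (length a))) / real e"
proof -
  define b where "b = sort a"
  have b: "sorted b" "length b = length a"
    unfolding b_def by simp_all
  have "b ! m \<le> e" if "m < length b" for m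
    using assms(1) that unfolding b_def by (metis in_set_conv_nth length_sort nth_mem set_sort)
  then have "{..<e} \<inter> {i. i < b ! m} = {..<b ! m}" if "m < length b" for m
    using that by fastforce
  then have layer_cake: "real (b ! m) = (\<Sum>i<e. of_bool (i < b ! m))" if "m < length b" for m
    using that by simp
  have "hodge_polygon e a x = polygon_of_slopes (\<lambda>m. (\<Sum>i<e. of_bool (i < b ! m)) / real e) (length b) x"
    unfolding hodge_polygon_eq_polygon_of_slopes b_def[symmetric] b(2)[symmetric]
    using layer_cake assms(3) b(2) by (intro polygon_of_slopes_cong) simp_all
  also have "\<dots> = (\<Sum>i<e. polygon_of_slopes (\<lambda>m. of_bool (i < b ! m)) (length b) x) / real e"
    by (simp only: polygon_of_slopes_divide polygon_of_slopes_sum)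
  also have "\<dots> = (\<Sum>i<e. max 0 (x + real (card {m. m < length b \<and> i < b ! m}) - real (length b))) / real e"
    using polygon_of_slopes_sorted_indicator[OF b(1) assms(2)] assms(3) b(2) by simp
  finally show ?thesis
    unfolding b_def length_sort card_nth_sort .
qed

context vector_space
begin

lemma linear_funpow:
  assumes "Vector_Spaces.linear scale scale T"
  shows "Vector_Spaces.linear scale scale (T ^^ n)"
proof (induction n)
  case 0
  show ?case unfolding funpow.simps(1) by (rule linear_id)
next
  case (Suc n)
  show ?case unfolding funpow.simps(2) by (rule Vector_Spaces.linear_compose[OF Suc.IH assms])
qed

lemma funpow_eq_0_mono:
  assumes "Vector_Spaces.linear scale scale T" and "(T ^^ n) x = 0" and "n \<le> m"
  shows "(T ^^ m) x = 0"
proof -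
  interpret vector_space_pair scale scale ..
  have "(T ^^ m) x = (T ^^ (m - n)) ((T ^^ n) x)"
    using assms(3) by (metis funpow_add comp_apply le_add_diff_inverse2)
  then show ?thesis
    using assms(2) linear_0[OF linear_funpow[OF assms(1)]] by simp
qed

lemma inj_on_independent_image_if_coefficients_unique:
  assumes "finite I" and unique: "\<And>c. (\<Sum>p\<in>I. scale (c p) (f p)) = 0 \<Longrightarrow> \<forall>p\<in>I. c p = 0"
  shows "inj_on f I \<and> independent (f ` I)"
proof
  show inj: "inj_on f I"
  proof (rule inj_onI, rule ccontr)
    fix p q assume pq: "p \<in> I" "q \<in> I" "f p = f q" "p \<noteq> q"
    have pick: "(\<Sum>r\<in>I. scale (of_bool (r = s)) (f r)) = f s" if "s \<in> I" for s
    proof -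
      have "(\<Sum>r\<in>I. scale (of_bool (r = s)) (f r)) = (\<Sum>r\<in>I. if r = s then f r else 0)"
        by (rule sum.cong) auto
      then show ?thesis using that assms(1) by simp
    qed
    have "(\<Sum>r\<in>I. scale (of_bool (r = p) - of_bool (r = q)) (f r)) = f p - f q"
      using pq(1,2) by (simp add: scale_left_diff_distrib sum_subtractf pick)
    then show False
      using unique[of "\<lambda>r. of_bool (r = p) - of_bool (r = q)"] pq by auto
  qed
  show "independent (f ` I)"
  proof (rule independent_if_scalars_zero)
    fix u w assume u: "(\<Sum>y\<in>f ` I. scale (u y) y) = 0" and "w \<in> f ` I"
    then obtain p where "p \<in> I" "w = f p" by blast
    moreover have "(\<Sum>p\<in>I. scale (u (f p)) (f p)) = 0"
      using u by (simp add: sum.reindex[OF inj])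
    ultimately show "u w = 0" using unique[of "u \<circ> f"] by simp
  qed (use assms(1) in simp)
qed

lemma cyclic_decomposition_basis:
  assumes "is_cyclic_decomposition scale T h a v"
  shows "inj_on (\<lambda>(j, l). (T ^^ l) (v j)) (SIGMA j:{..<h}. {..<a ! j})"
    and "independent ((\<lambda>(j, l). (T ^^ l) (v j)) ` (SIGMA j:{..<h}. {..<a ! j}))"
    and "span ((\<lambda>(j, l). (T ^^ l) (v j)) ` (SIGMA j:{..<h}. {..<a ! j})) = UNIV"
proof -
  let ?I = "SIGMA j:{..<h}. {..<a ! j}" and ?f = "\<lambda>(j, l). (T ^^ l) (v j)"
  have "(\<Sum>p\<in>?I. scale (c p) (?f p)) = (\<Sum>j<h. \<Sum>l<a ! j. scale (c (j, l)) ((T ^^ l) (v j)))" for c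
    by (simp add: sum.Sigma case_prod_beta)
  then have "\<forall>p\<in>?I. c p = 0" if "(\<Sum>p\<in>?I. scale (c p) (?f p)) = 0" for c
    using assms that unfolding is_cyclic_decomposition_def by fastforce
  then show "inj_on ?f ?I" and "independent (?f ` ?I)"
    using inj_on_independent_image_if_coefficients_unique[of ?I ?f] by auto
  have "?f ` ?I = {(T ^^ l) (v j) | j l. j < h \<and> l < a ! j}"
    by force
  then show "span (?f ` ?I) = UNIV"
    using assms unfolding is_cyclic_decomposition_def by simp
qed

lemma dim_kerT_cyclic_decomposition:
  assumes lin: "Vector_Spaces.linear scale scale T" and dec: "is_cyclic_decomposition scale T h a v"
  shows "dim (kerT T i) = (\<Sum>j<h. min (a ! j) i)"
proof -
  interpret vector_space_pair scale scale ..
  define I where "I = (SIGMA j:{..<h}. {..<a ! j})"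
  define f where "f = (\<lambda>(j, l). (T ^^ l) (v j))"
  define J where "J = {(j, l) \<in> I. a ! j \<le> i + l}"
  define shift :: "nat \<times> nat \<Rightarrow> nat \<times> nat" where "shift = (\<lambda>(j, l). (j, i + l))"
  have Ti: "Vector_Spaces.linear scale scale (T ^^ i)"
    by (rule linear_funpow[OF lin])
  have inj: "inj_on f I" and indep: "independent (f ` I)" and span_I: "span (f ` I) = UNIV"
    using cyclic_decomposition_basis[OF dec] unfolding I_def f_def by auto
  have Ti_f: "(T ^^ i) (f p) = f (shift p)" for p
    by (simp add: f_def shift_def case_prod_beta funpow_add)
  have J_ker: "f ` J \<subseteq> kerT T i"
  proof
    fix y assume "y \<in> f ` J"
    then obtain j l where "j < h" "a ! j \<le> i + l" "y = f (j, l)"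
      unfolding J_def I_def by auto
    moreover have "(T ^^ a ! j) (v j) = 0"
      using dec \<open>j < h\<close> unfolding is_cyclic_decomposition_def by auto
    ultimately have "(T ^^ i) y = (T ^^ (i + l)) (v j)" and "(T ^^ (i + l)) (v j) = 0"
      using Ti_f[of "(j, l)"] funpow_eq_0_mono[OF lin] by (auto simp: shift_def f_def)
    then show "y \<in> kerT T i"
      by (simp add: kerT_def)
  qed
  have "kerT T i \<subseteq> span (f ` J)"
  proof
    fix x assume x: "x \<in> kerT T i"
    have "f ` I = f ` J \<union> f ` (I - J)"
      unfolding J_def by blast
    then have "x \<in> span (f ` J \<union> f ` (I - J))"
      using span_I by simp
    then obtain y z where xyz: "x = y + z" "y \<in> span (f ` J)" "z \<in> span (f ` (I - J))"
      unfolding span_Un by blast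
    have "(T ^^ i) y = 0"
      using linear_eq_0_on_span[OF Ti] J_ker xyz(2) by (auto simp: kerT_def)
    then have "(T ^^ i) z = 0"
      using x xyz(1) linear_add[OF Ti] by (simp add: kerT_def)
    \<comment> \<open>On the basis vectors outside J, T^i acts injectively by shifting them to basis vectors.\<close>
    moreover have shift_I: "shift p \<in> I" if "p \<in> I - J" for p
      using that unfolding I_def J_def shift_def by auto
    have "inj_on (T ^^ i) (f ` (I - J))"
    proof (rule inj_onI)
      fix y z assume "y \<in> f ` (I - J)" "z \<in> f ` (I - J)" "(T ^^ i) y = (T ^^ i) z"
      then obtain p q where "p \<in> I - J" "q \<in> I - J" "y = f p" "z = f q" "f (shift p) = f (shift q)"
        by (auto simp: Ti_f)
      then have "shift p = shift q"
        using inj_onD[OF inj] shift_I by blast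
      then have "p = q"
        by (auto simp: shift_def split: prod.splits)
      then show "y = z"
        using \<open>y = f p\<close> \<open>z = f q\<close> by simp
    qed
    moreover have "independent ((T ^^ i) ` f ` (I - J))"
      using shift_I by (intro independent_mono[OF indep]) (auto simp: Ti_f)
    moreover have "finite (I - J)"
      unfolding I_def by auto
    ultimately have "z = 0"
      using linear_indep_image_lemma[OF Ti] xyz(3) by blast
    then show "x \<in> span (f ` J)"
      using xyz by simp
  qed
  moreover have "card (f ` J) = (\<Sum>j<h. min (a ! j) i)"
  proof -
    have "J = (SIGMA j:{..<h}. {a ! j - i..<a ! j})"
      unfolding J_def I_def by auto
    moreover have "inj_on f J"
      using inj unfolding J_def by (rule inj_on_subset) auto
    moreover have "a ! j - (a ! j - i) = min (a ! j) i" for j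
      by simp
    ultimately show ?thesis
      by (simp add: card_image)
  qed
  ultimately show ?thesis
    using dim_unique[OF J_ker _ independent_mono[OF indep]] unfolding J_def by blast
qed

lemma delta_Suc_cyclic_decomposition:
  assumes "Vector_Spaces.linear scale scale T" and "is_cyclic_decomposition scale T h a v"
  shows "delta scale T (Suc i) = real (card {j. j < h \<and> i < a ! j})"
proof -
  have "delta scale T (Suc i) = (\<Sum>j<h. real (min (a ! j) (Suc i)) - real (min (a ! j) i))"
    unfolding delta_def dim_kerT_cyclic_decomposition[OF assms] by (simp add: sum_subtractf)
  also have "\<dots> = (\<Sum>j<h. of_bool (i < a ! j))"
    by (rule sum.cong) auto
  finally show ?thesis
    by (simp add: Int_def)
qed

end

lemma P_poly_map_upt:
  "P_poly h (map g [1..<e + 1]) x = (\<Sum>i<e. max 0 (x + g (Suc i) - real h)) / real e"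
proof -
  have "map g [1..<e + 1] ! i = g (Suc i)" if "i < e" for i
    using that by (simp del: upt_Suc)
  then show ?thesis
    unfolding P_poly_def by (simp del: upt_Suc add: sum_divide_distrib)
qed

theorem mainTheorem3:
  fixes scale :: "'k::field \<Rightarrow> 'm::ab_group_add \<Rightarrow> 'm"
    and T :: "'m \<Rightarrow> 'm"
    and e h :: nat
  assumes vs: "vector_space scale"
    and lin: "Vector_Spaces.linear scale scale T"
    and e_pos: "e \<ge> 1" and h_pos: "h \<ge> 1"
    and nil: "\<forall>x. (T ^^ e) x = 0"
    and findim: "\<exists>B. finite B \<and> module.span scale B = UNIV"
    and gen: "\<exists>g :: nat \<Rightarrow> 'm. module.span scale {(T ^^ j) (g i) | i j. i < h \<and> j < e} = UNIV"
  shows "\<forall>(a :: nat list) (v :: nat \<Rightarrow> 'm).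
           is_cyclic_decomposition scale T h a v \<and> (\<forall>i<h. a ! i \<le> e) \<longrightarrow>
           (\<forall>x \<in> {0 .. real h}.
              hodge_polygon e a x = P_poly h (map (delta scale T) [1..<e + 1]) x)"
proof (intro allI impI ballI)
  fix a :: "nat list" and v :: "nat \<Rightarrow> 'm" and x :: real
  assume "is_cyclic_decomposition scale T h a v \<and> (\<forall>i<h. a ! i \<le> e)" and x: "x \<in> {0..real h}"
  then have dec: "is_cyclic_decomposition scale T h a v" and a_le: "\<forall>i<h. a ! i \<le> e"
    by simp_all
  have len: "length a = h"
    using dec unfolding is_cyclic_decomposition_def by simp
  have "hodge_polygon e a x = (\<Sum>i<e. max 0 (x + real (card {j. j < h \<and> i < a ! j}) - real h)) / real e"
    using hodge_polygon_eq_sum_max[of a e x] a_le x len by simp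
  also have "\<dots> = P_poly h (map (delta scale T) [1..<e + 1]) x"
    unfolding P_poly_map_upt vector_space.delta_Suc_cyclic_decomposition[OF vs lin dec] ..
  finally show "hodge_polygon e a x = P_poly h (map (delta scale T) [1..<e + 1]) x" .
qed

end
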